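(* Let $(X,d)$ be a metric space, let $\sigma$ and $\tau$ be conical bicombings on $X$, and let $n\ge1$ be an integer. For $x,y\in X$ set $c_{xy}(n;0):=x$, $c_{xy}(n;n):=y$ and \[ c_{xy}(n;i):=\sigma\big(\tau_{xy}(\tfrac{i-1}{n}),\tau_{xy}(\tfrac{i+1}{n}),\tfrac12\big)\quad(1\le i\le n-1), \] and define $c_\sigma(n;\tau)\colon X\times X\times[0,1]\to X$ by \[ c_\sigma(n;\tau)\big(x,y,(1-\lambda)\tfrac{i}{n}+\lambda\tfrac{i+1}{n}\big):=\sigma\big(c_{xy}(n;i),c_{xy}(n;i+1),\lambda\big) \] for $0\le i\le n-1$, $\lambda\in[0,1]$. Then $c_\sigma(n;\tau)$ is a conical bicombing on $X$. Moreover, if $\sigma$ is consistent, then $c_\sigma(n;\sigma)=\sigma$.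
   Context: A bicombing on $(X,d)$ is a map $\sigma\colon X\times X\times[0,1]\to X$ such that each $\sigma_{xy}:=\sigma(x,y,\cdot)$ is a geodesic from $x$ to $y$ ($\sigma_{xy}(0)=x$, $\sigma_{xy}(1)=y$, $d(\sigma_{xy}(s),\sigma_{xy}(t))=|s-t|d(x,y)$); it is conical if $d(\sigma_{xy}(t),\sigma_{x'y'}(t))\le(1-t)d(x,x')+t\,d(y,y')$ for all $x,y,x',y'$, $t\in[0,1]$. A bicombing $\sigma$ is consistent if $\sigma_{pq}([0,1])\subset\sigma_{xy}([0,1])$ whenever $p,q\in\sigma_{xy}([0,1])$. *)

theory Defs
  imports "HOL-Analysis.Analysis"
begin

text \<open>The metric space (X,d) is the whole carrier of a type of class metric_space.
  A bicombing is a map sigma x y t, only its values for t in [0,1] matter.\<close>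

definition bicombing :: "('a::metric_space \<Rightarrow> 'a \<Rightarrow> real \<Rightarrow> 'a) \<Rightarrow> bool" where
  "bicombing \<sigma> \<longleftrightarrow> (\<forall>x y. \<sigma> x y 0 = x \<and> \<sigma> x y 1 = y \<and>
     (\<forall>s\<in>{0..1}. \<forall>t\<in>{0..1}. dist (\<sigma> x y s) (\<sigma> x y t) = \<bar>s - t\<bar> * dist x y))"

definition conical_bicombing :: "('a::metric_space \<Rightarrow> 'a \<Rightarrow> real \<Rightarrow> 'a) \<Rightarrow> bool" where
  "conical_bicombing \<sigma> \<longleftrightarrow> bicombing \<sigma> \<and>
     (\<forall>x y x' y'. \<forall>t\<in>{0..1}.
        dist (\<sigma> x y t) (\<sigma> x' y' t) \<le> (1 - t) * dist x x' + t * dist y y')"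

definition consistent_bicombing :: "('a::metric_space \<Rightarrow> 'a \<Rightarrow> real \<Rightarrow> 'a) \<Rightarrow> bool" where
  "consistent_bicombing \<sigma> \<longleftrightarrow> bicombing \<sigma> \<and>
     (\<forall>x y p q. p \<in> \<sigma> x y ` {0..1} \<and> q \<in> \<sigma> x y ` {0..1} \<longrightarrow>
        \<sigma> p q ` {0..1} \<subseteq> \<sigma> x y ` {0..1})"

definition cpt :: "('a \<Rightarrow> 'a \<Rightarrow> real \<Rightarrow> 'a) \<Rightarrow> ('a \<Rightarrow> 'a \<Rightarrow> real \<Rightarrow> 'a) \<Rightarrow> nat \<Rightarrow> 'a \<Rightarrow> 'a \<Rightarrow> nat \<Rightarrow> 'a" where
  "cpt \<sigma> \<tau> n x y i =
     (if i = 0 then x else if i = n then y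
      else \<sigma> (\<tau> x y ((real i - 1) / real n)) (\<tau> x y ((real i + 1) / real n)) (1/2))"

text \<open>c_sigma(n;tau): for t in [0,1], t = (1-lambda) i/n + lambda (i+1)/n with
  i = min(floor(n t), n-1) and lambda = n t - i.\<close>
definition cbic :: "('a \<Rightarrow> 'a \<Rightarrow> real \<Rightarrow> 'a) \<Rightarrow> nat \<Rightarrow> ('a \<Rightarrow> 'a \<Rightarrow> real \<Rightarrow> 'a) \<Rightarrow> 'a \<Rightarrow> 'a \<Rightarrow> real \<Rightarrow> 'a" where
  "cbic \<sigma> n \<tau> x y t =
     (let i = min (nat \<lfloor>real n * t\<rfloor>) (n - 1); l = real n * t - real i
      in \<sigma> (cpt \<sigma> \<tau> n x y i) (cpt \<sigma> \<tau> n x y (i + 1)) l)"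

end

(*
  Each point c_xy(n;i), the endpoints included as degenerate midpoints x = sigma(x,x,1/2) and
  y = sigma(y,y,1/2), is the sigma-midpoint of two points tau_xy(a), tau_xy(b) with (a+b)/2 = i/n,
  and a, b both increase with i. Conicality of sigma and tau then gives
  d(c_i, c_{i+1}) <= d(x,y)/n and d(c_xy(n;i), c_x'y'(n;i)) <= (1 - i/n) d(x,x') + (i/n) d(y,y').
  The first bound makes t |-> c_sigma(n;tau)(x,y,t) a d(x,y)-Lipschitz path from x to y, which
  forces it to be a linear geodesic; the second, interpolated along the pieces with the
  conicality of sigma, gives conicality. If sigma is consistent, sigma(sigma_xy(a), sigma_xy(b), l)
  is the point sigma_xy((1-l)a + lb), so c_xy(n;i) = sigma_xy(i/n) and every piece of
  c_sigma(n;sigma)(x,y,-) is a reparametrised subsegment of sigma_xy.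
*)
theory Submission
  imports Defs
begin

lemma bicombing_start: "bicombing \<sigma> \<Longrightarrow> \<sigma> x y 0 = x"
  unfolding bicombing_def by blast

lemma bicombing_end: "bicombing \<sigma> \<Longrightarrow> \<sigma> x y 1 = y"
  unfolding bicombing_def by blast

lemma bicombing_dist:
  "bicombing \<sigma> \<Longrightarrow> s \<in> {0..1} \<Longrightarrow> t \<in> {0..1} \<Longrightarrow>
    dist (\<sigma> x y s) (\<sigma> x y t) = \<bar>s - t\<bar> * dist x y"
  unfolding bicombing_def by blast

lemma bicombing_same_endpoints:
  assumes "bicombing \<sigma>" "t \<in> {0..1}"
  shows "\<sigma> x x t = x"
  using bicombing_dist[OF assms, of 0 x x] bicombing_start[OF assms(1)] by simp

lemma conical_bicombing_imp_bicombing: "conical_bicombing \<sigma> \<Longrightarrow> bicombing \<sigma>"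
  unfolding conical_bicombing_def by blast

lemma conical_bicombing_dist:
  "conical_bicombing \<sigma> \<Longrightarrow> t \<in> {0..1} \<Longrightarrow>
    dist (\<sigma> x y t) (\<sigma> x' y' t) \<le> (1 - t) * dist x x' + t * dist y y'"
  unfolding conical_bicombing_def by blast

lemma consistent_bicombing_imp_bicombing: "consistent_bicombing \<sigma> \<Longrightarrow> bicombing \<sigma>"
  unfolding consistent_bicombing_def by blast

lemma lipschitz_path_is_geodesic:
  fixes g :: "real \<Rightarrow> 'a::metric_space"
  assumes lip: "(dist (g 0) (g 1))-lipschitz_on {0..1} g" and "s \<in> {0..1}" "t \<in> {0..1}"
  shows "dist (g s) (g t) = \<bar>s - t\<bar> * dist (g 0) (g 1)"
proof -
  let ?D = "dist (g 0) (g 1)"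
  have le: "dist (g u) (g v) \<le> \<bar>u - v\<bar> * ?D" if "u \<in> {0..1}" "v \<in> {0..1}" for u v
    using lipschitz_onD[OF lip that] by (simp add: dist_real_def mult.commute)
  have through: "?D \<le> dist (g 0) (g u) + dist (g u) (g v) + dist (g v) (g 1)" for u v
    by (meson dist_triangle add_right_mono order_trans)
  have "?D \<le> s * ?D + dist (g s) (g t) + (1 - t) * ?D"
    using through[of s t] le[of 0 s] le[of t 1] assms(2,3) by fastforce
  moreover have "?D \<le> t * ?D + dist (g s) (g t) + (1 - s) * ?D"
    using through[of t s] le[of 0 t] le[of s 1] assms(2,3) by (fastforce simp: dist_commute)
  ultimately have "\<bar>s - t\<bar> * ?D \<le> dist (g s) (g t)"
    by (cases "s \<le> t") (simp_all add: algebra_simps)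
  with le[OF assms(2,3)] show ?thesis by linarith
qed

lemma consistent_bicombing_subsegment:
  assumes cons: "consistent_bicombing \<sigma>" and a: "a \<in> {0..1}" and b: "b \<in> {0..1}"
    and l: "l \<in> {0..1}"
  shows "\<sigma> (\<sigma> x y a) (\<sigma> x y b) l = \<sigma> x y ((1 - l) * a + l * b)"
proof -
  have bic: "bicombing \<sigma>" using cons by (rule consistent_bicombing_imp_bicombing)
  let ?p = "\<sigma> x y a" and ?q = "\<sigma> x y b" and ?D = "dist x y"
  have "\<sigma> ?p ?q l \<in> \<sigma> ?p ?q ` {0..1}" using l by blast
  also have "\<dots> \<subseteq> \<sigma> x y ` {0..1}" using cons a b unfolding consistent_bicombing_def by blast
  finally obtain r where r: "r \<in> {0..1}" "\<sigma> ?p ?q l = \<sigma> x y r" by blast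
  show ?thesis
  proof (cases "?D = 0")
    case True
    then have "x = y" by simp
    moreover have "(1 - l) * a + l * b \<in> {0..1}"
      using a b l by (auto intro!: convex_bound_le)
    ultimately show ?thesis using r bicombing_same_endpoints[OF bic] by simp
  next
    case False
    have pq: "dist ?p ?q = \<bar>a - b\<bar> * ?D" using bicombing_dist[OF bic a b] .
    have "\<bar>r - a\<bar> * ?D = l * (\<bar>a - b\<bar> * ?D)"
      using bicombing_dist[OF bic r(1) a, of x y] bicombing_dist[OF bic l, of 0 ?p ?q] l
      by (simp add: r(2)[symmetric] bicombing_start[OF bic] pq)
    then have ra: "\<bar>r - a\<bar> = l * \<bar>a - b\<bar>" using False by simp
    have "\<bar>r - b\<bar> * ?D = (1 - l) * (\<bar>a - b\<bar> * ?D)"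
      using bicombing_dist[OF bic r(1) b, of x y] bicombing_dist[OF bic l, of 1 ?p ?q] l
      by (simp add: r(2)[symmetric] bicombing_end[OF bic] pq)
    then have rb: "\<bar>r - b\<bar> = (1 - l) * \<bar>a - b\<bar>" using False by simp
    have "r = (1 - l) * a + l * b"
      using ra rb l by (cases "a \<le> b") (simp_all add: abs_if algebra_simps split: if_splits)
    then show ?thesis using r(2) by simp
  qed
qed

text \<open>The parameters a, b with c_xy(n;i) = sigma(tau_xy(a), tau_xy(b), 1/2), see cpt_eq_midpoint
  (truncated nat subtraction makes cpt_lo n 0 = 0).\<close>

definition cpt_lo :: "nat \<Rightarrow> nat \<Rightarrow> real" where
  "cpt_lo n i = (if i = n then 1 else real (i - 1) / real n)"

definition cpt_hi :: "nat \<Rightarrow> nat \<Rightarrow> real" where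
  "cpt_hi n i = (if i = 0 then 0 else min 1 (real (i + 1) / real n))"

lemma cpt_lo_hi_mem:
  assumes "n \<ge> 1" "i \<le> n"
  shows "cpt_lo n i \<in> {0..1}" "cpt_hi n i \<in> {0..1}"
  using assms by (auto simp: cpt_lo_def cpt_hi_def divide_le_eq_1)

lemma cpt_lo_plus_hi:
  assumes "n \<ge> 1" "i \<le> n"
  shows "cpt_lo n i + cpt_hi n i = 2 * (real i / real n)"
  using assms by (auto simp: cpt_lo_def cpt_hi_def of_nat_diff divide_le_eq_1 field_simps)

lemma cpt_lo_hi_mono:
  assumes "i < n"
  shows "cpt_lo n i \<le> cpt_lo n (Suc i)" "cpt_hi n i \<le> cpt_hi n (Suc i)"
  using assms by (auto simp: cpt_lo_def cpt_hi_def divide_le_eq_1 divide_right_mono)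

lemma cpt_eq_midpoint:
  assumes "bicombing \<sigma>" "bicombing \<tau>" "n \<ge> 1" "i \<le> n"
  shows "cpt \<sigma> \<tau> n x y i = \<sigma> (\<tau> x y (cpt_lo n i)) (\<tau> x y (cpt_hi n i)) (1/2)"
  using assms
  by (auto simp: cpt_def cpt_lo_def cpt_hi_def of_nat_diff divide_le_eq_1
      bicombing_start bicombing_end bicombing_same_endpoints add.commute)

lemma cpt_dist_Suc:
  assumes \<sigma>: "conical_bicombing \<sigma>" and \<tau>: "bicombing \<tau>" and "i < n"
  shows "dist (cpt \<sigma> \<tau> n x y i) (cpt \<sigma> \<tau> n x y (Suc i)) \<le> dist x y / real n"
proof -
  have n: "n \<ge> 1" using \<open>i < n\<close> by simp
  let ?D = "dist x y" and ?l = "cpt_lo n" and ?h = "cpt_hi n"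
  have mem: "?l i \<in> {0..1}" "?h i \<in> {0..1}" "?l (Suc i) \<in> {0..1}" "?h (Suc i) \<in> {0..1}"
    using cpt_lo_hi_mem[OF n] \<open>i < n\<close> by auto
  have "dist (cpt \<sigma> \<tau> n x y i) (cpt \<sigma> \<tau> n x y (Suc i))
      \<le> 1/2 * dist (\<tau> x y (?l i)) (\<tau> x y (?l (Suc i)))
        + 1/2 * dist (\<tau> x y (?h i)) (\<tau> x y (?h (Suc i)))"
    using conical_bicombing_dist[OF \<sigma>, of "1/2"] \<open>i < n\<close> n
    by (simp add: cpt_eq_midpoint[OF conical_bicombing_imp_bicombing[OF \<sigma>] \<tau>])
  also have "\<dots> = 1/2 * ((?l (Suc i) + ?h (Suc i)) - (?l i + ?h i)) * ?D"
    using cpt_lo_hi_mono[OF \<open>i < n\<close>]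
    by (simp add: bicombing_dist[OF \<tau> mem(1,3)] bicombing_dist[OF \<tau> mem(2,4)] algebra_simps)
  also have "(?l (Suc i) + ?h (Suc i)) - (?l i + ?h i) = 2 / real n"
    using cpt_lo_plus_hi[OF n, of i] cpt_lo_plus_hi[OF n, of "Suc i"] \<open>i < n\<close>
    by (simp add: add_divide_distrib)
  also have "1/2 * (2 / real n) * ?D = ?D / real n"
    by simp
  finally show ?thesis .
qed

lemma cpt_conical_dist:
  assumes \<sigma>: "conical_bicombing \<sigma>" and \<tau>: "conical_bicombing \<tau>" and n: "n \<ge> 1" and "i \<le> n"
  shows "dist (cpt \<sigma> \<tau> n x y i) (cpt \<sigma> \<tau> n x' y' i)
    \<le> (1 - real i / real n) * dist x x' + real i / real n * dist y y'"
proof -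
  let ?A = "dist x x'" and ?B = "dist y y'" and ?l = "cpt_lo n i" and ?h = "cpt_hi n i"
  have mem: "?l \<in> {0..1}" "?h \<in> {0..1}" using cpt_lo_hi_mem[OF n \<open>i \<le> n\<close>] .
  have "dist (cpt \<sigma> \<tau> n x y i) (cpt \<sigma> \<tau> n x' y' i)
      \<le> 1/2 * dist (\<tau> x y ?l) (\<tau> x' y' ?l) + 1/2 * dist (\<tau> x y ?h) (\<tau> x' y' ?h)"
    using conical_bicombing_dist[OF \<sigma>, of "1/2"] \<open>i \<le> n\<close> n
    by (simp add: cpt_eq_midpoint[OF conical_bicombing_imp_bicombing[OF \<sigma>]
          conical_bicombing_imp_bicombing[OF \<tau>]])
  also have "\<dots> \<le> 1/2 * ((1 - ?l) * ?A + ?l * ?B) + 1/2 * ((1 - ?h) * ?A + ?h * ?B)"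
    using conical_bicombing_dist[OF \<tau> mem(1)] conical_bicombing_dist[OF \<tau> mem(2)]
    by (intro add_mono mult_left_mono) auto
  also have "\<dots> = (1 - (?l + ?h) / 2) * ?A + (?l + ?h) / 2 * ?B"
    by (simp add: field_simps)
  also have "\<dots> = (1 - real i / real n) * ?A + real i / real n * ?B"
    using cpt_lo_plus_hi[OF n \<open>i \<le> n\<close>] by simp
  finally show ?thesis .
qed

lemma cpt_self_eq:
  assumes \<sigma>: "consistent_bicombing \<sigma>" and n: "n \<ge> 1" and "i \<le> n"
  shows "cpt \<sigma> \<sigma> n x y i = \<sigma> x y (real i / real n)"
proof -
  have bic: "bicombing \<sigma>" using \<sigma> by (rule consistent_bicombing_imp_bicombing)
  have "cpt \<sigma> \<sigma> n x y i = \<sigma> x y ((1 - 1/2) * cpt_lo n i + 1/2 * cpt_hi n i)"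
    using consistent_bicombing_subsegment[OF \<sigma> cpt_lo_hi_mem[OF n \<open>i \<le> n\<close>]]
    by (simp add: cpt_eq_midpoint[OF bic bic n \<open>i \<le> n\<close>])
  also have "(1 - 1/2) * cpt_lo n i + 1/2 * cpt_hi n i = real i / real n"
    using cpt_lo_plus_hi[OF n \<open>i \<le> n\<close>] by simp
  finally show ?thesis .
qed

lemma unit_interval_piece_exists:
  fixes t :: real
  assumes "n \<ge> 1" "t \<in> {0..1}"
  obtains k where "k < n" "real k \<le> real n * t" "real n * t \<le> real k + 1"
proof (cases "t = 1")
  case True
  with assms show ?thesis by (intro that[of "n - 1"]) (auto simp: of_nat_diff)
next
  case False
  with assms have "0 \<le> real n * t" "real n * t < real n" by auto
  then show ?thesis
    by (intro that[of "nat \<lfloor>real n * t\<rfloor>"]) (linarith, simp, linarith)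
qed

lemma cbic_eq_piece:
  assumes bic: "bicombing \<sigma>" and "k < n" "real k \<le> real n * t" "real n * t \<le> real k + 1"
  shows "cbic \<sigma> n \<tau> x y t = \<sigma> (cpt \<sigma> \<tau> n x y k) (cpt \<sigma> \<tau> n x y (Suc k)) (real n * t - real k)"
proof -
  define i where "i = min (nat \<lfloor>real n * t\<rfloor>) (n - 1)"
  have cbic_i: "cbic \<sigma> n \<tau> x y t = \<sigma> (cpt \<sigma> \<tau> n x y i) (cpt \<sigma> \<tau> n x y (Suc i)) (real n * t - real i)"
    by (simp add: cbic_def i_def Let_def)
  have "k \<le> i" using assms(2,3) unfolding i_def by (simp add: le_nat_iff le_floor_iff)
  moreover have "real i \<le> real n * t" unfolding i_def using assms(3) by linarith
  ultimately consider "i = k" | "i = Suc k" "real n * t = real (Suc k)"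
    using assms(4) by fastforce
  then show ?thesis
  proof cases
    case 1
    then show ?thesis using cbic_i by simp
  next
    case 2
    then show ?thesis using cbic_i by (simp add: bicombing_start[OF bic] bicombing_end[OF bic])
  qed
qed

lemma cbic_start:
  assumes "bicombing \<sigma>" "n \<ge> 1"
  shows "cbic \<sigma> n \<tau> x y 0 = x"
  using cbic_eq_piece[OF assms(1), of 0 n 0] assms
  by (simp add: bicombing_start cpt_def)

lemma cbic_end:
  assumes "bicombing \<sigma>" "n \<ge> 1"
  shows "cbic \<sigma> n \<tau> x y 1 = y"
  using cbic_eq_piece[OF assms(1), of "n - 1" n 1] assms
  by (simp add: bicombing_end cpt_def of_nat_diff)

lemma cbic_lipschitz_on_piece:
  assumes \<sigma>: "conical_bicombing \<sigma>" and \<tau>: "bicombing \<tau>" and "k < n"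
  shows "(dist x y)-lipschitz_on {real k / real n .. real (Suc k) / real n} (cbic \<sigma> n \<tau> x y)"
proof (rule lipschitz_onI)
  fix s t
  assume "s \<in> {real k / real n .. real (Suc k) / real n}"
    and "t \<in> {real k / real n .. real (Suc k) / real n}"
  then have s: "real k \<le> real n * s" "real n * s \<le> real k + 1"
    and t: "real k \<le> real n * t" "real n * t \<le> real k + 1"
    using \<open>k < n\<close> by (auto simp: field_simps)
  have bic: "bicombing \<sigma>" using \<sigma> by (rule conical_bicombing_imp_bicombing)
  let ?c = "cpt \<sigma> \<tau> n x y"
  have "dist (cbic \<sigma> n \<tau> x y s) (cbic \<sigma> n \<tau> x y t)
      = \<bar>(real n * s - real k) - (real n * t - real k)\<bar> * dist (?c k) (?c (Suc k))"
    using s t by (simp add: cbic_eq_piece[OF bic \<open>k < n\<close>] bicombing_dist[OF bic])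
  also have "\<dots> \<le> (real n * \<bar>s - t\<bar>) * (dist x y / real n)"
    using cpt_dist_Suc[OF \<sigma> \<tau> \<open>k < n\<close>]
    by (intro mult_mono) (auto simp: abs_mult simp flip: right_diff_distrib)
  also have "\<dots> = dist x y * dist s t"
    using \<open>k < n\<close> by (simp add: dist_real_def)
  finally show "dist (cbic \<sigma> n \<tau> x y s) (cbic \<sigma> n \<tau> x y t) \<le> dist x y * dist s t" .
qed simp

lemma cbic_lipschitz:
  assumes \<sigma>: "conical_bicombing \<sigma>" and \<tau>: "bicombing \<tau>" and n: "n \<ge> 1"
  shows "(dist x y)-lipschitz_on {0..1} (cbic \<sigma> n \<tau> x y)"
proof (rule lipschitz_on_closed_Union[where I = "{..<n}"])
  show "{0..1} \<subseteq> (\<Union>k\<in>{..<n}. {real k / real n .. real (Suc k) / real n})"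
  proof
    fix t :: real assume "t \<in> {0..1}"
    then obtain k where "k < n" "real k \<le> real n * t" "real n * t \<le> real k + 1"
      using unit_interval_piece_exists[OF n] by blast
    then show "t \<in> (\<Union>k\<in>{..<n}. {real k / real n .. real (Suc k) / real n})"
      by (auto simp: field_simps)
  qed
  show "(dist x y)-lipschitz_on {real k / real n .. real (Suc k) / real n} (cbic \<sigma> n \<tau> x y)"
    if "k \<in> {..<n}" for k
    using cbic_lipschitz_on_piece[OF \<sigma> \<tau>] that by blast
qed auto

lemma bicombing_cbic:
  assumes \<sigma>: "conical_bicombing \<sigma>" and \<tau>: "bicombing \<tau>" and n: "n \<ge> 1"
  shows "bicombing (cbic \<sigma> n \<tau>)"
proof -
  have bic: "bicombing \<sigma>" using \<sigma> by (rule conical_bicombing_imp_bicombing)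
  have "dist (cbic \<sigma> n \<tau> x y s) (cbic \<sigma> n \<tau> x y t) = \<bar>s - t\<bar> * dist x y"
    if "s \<in> {0..1}" "t \<in> {0..1}" for x y s t
    using lipschitz_path_is_geodesic[of "cbic \<sigma> n \<tau> x y" s t]
      cbic_lipschitz[OF \<sigma> \<tau> n, of x y] that
    by (simp add: cbic_start[OF bic n] cbic_end[OF bic n])
  then show ?thesis
    by (simp add: bicombing_def cbic_start[OF bic n] cbic_end[OF bic n])
qed

lemma cbic_conical_dist:
  assumes \<sigma>: "conical_bicombing \<sigma>" and \<tau>: "conical_bicombing \<tau>" and n: "n \<ge> 1"
    and "t \<in> {0..1}"
  shows "dist (cbic \<sigma> n \<tau> x y t) (cbic \<sigma> n \<tau> x' y' t) \<le> (1 - t) * dist x x' + t * dist y y'"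
proof -
  have bic: "bicombing \<sigma>" using \<sigma> by (rule conical_bicombing_imp_bicombing)
  obtain k where k: "k < n" "real k \<le> real n * t" "real n * t \<le> real k + 1"
    using unit_interval_piece_exists[OF n \<open>t \<in> {0..1}\<close>] .
  define l where "l = real n * t - real k"
  have l: "l \<in> {0..1}" using k by (simp add: l_def)
  let ?A = "dist x x'" and ?B = "dist y y'" and ?c = "cpt \<sigma> \<tau> n"
  have "dist (cbic \<sigma> n \<tau> x y t) (cbic \<sigma> n \<tau> x' y' t)
      \<le> (1 - l) * dist (?c x y k) (?c x' y' k) + l * dist (?c x y (Suc k)) (?c x' y' (Suc k))"
    unfolding cbic_eq_piece[OF bic k] l_def[symmetric] by (rule conical_bicombing_dist[OF \<sigma> l])
  also have "\<dots> \<le> (1 - l) * ((1 - real k / real n) * ?A + real k / real n * ?B)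
      + l * ((1 - real (Suc k) / real n) * ?A + real (Suc k) / real n * ?B)"
    using l k cpt_conical_dist[OF \<sigma> \<tau> n, of k] cpt_conical_dist[OF \<sigma> \<tau> n, of "Suc k"]
    by (intro add_mono mult_left_mono) auto
  also have "\<dots> = (1 - t) * ?A + t * ?B"
    using n by (simp add: l_def field_simps)
  finally show ?thesis .
qed

lemma conical_bicombing_cbic:
  assumes "conical_bicombing \<sigma>" "conical_bicombing \<tau>" "n \<ge> 1"
  shows "conical_bicombing (cbic \<sigma> n \<tau>)"
  using bicombing_cbic[OF assms(1) conical_bicombing_imp_bicombing[OF assms(2)] assms(3)]
    cbic_conical_dist[OF assms]
  by (simp add: conical_bicombing_def)

lemma cbic_self_eq:
  assumes \<sigma>: "consistent_bicombing \<sigma>" and n: "n \<ge> 1" and "t \<in> {0..1}"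
  shows "cbic \<sigma> n \<sigma> x y t = \<sigma> x y t"
proof -
  have bic: "bicombing \<sigma>" using \<sigma> by (rule consistent_bicombing_imp_bicombing)
  obtain k where k: "k < n" "real k \<le> real n * t" "real n * t \<le> real k + 1"
    using unit_interval_piece_exists[OF n \<open>t \<in> {0..1}\<close>] .
  define l where "l = real n * t - real k"
  have l: "l \<in> {0..1}" using k by (simp add: l_def)
  have mem: "real k / real n \<in> {0..1}" "real (Suc k) / real n \<in> {0..1}"
    using k by auto
  have "cbic \<sigma> n \<sigma> x y t = \<sigma> (\<sigma> x y (real k / real n)) (\<sigma> x y (real (Suc k) / real n)) l"
    using k by (simp add: cbic_eq_piece[OF bic k] cpt_self_eq[OF \<sigma> n] l_def)
  also have "\<dots> = \<sigma> x y ((1 - l) * (real k / real n) + l * (real (Suc k) / real n))"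
    by (rule consistent_bicombing_subsegment[OF \<sigma> mem l])
  also have "(1 - l) * (real k / real n) + l * (real (Suc k) / real n) = t"
    using n by (simp add: l_def field_simps)
  finally show ?thesis .
qed

theorem lemma5p1:
  fixes \<sigma> \<tau> :: "'a::metric_space \<Rightarrow> 'a \<Rightarrow> real \<Rightarrow> 'a" and n :: nat
  assumes "conical_bicombing \<sigma>" and "conical_bicombing \<tau>" and "n \<ge> 1"
  shows "conical_bicombing (cbic \<sigma> n \<tau>)
    \<and> (consistent_bicombing \<sigma> \<longrightarrow> (\<forall>x y. \<forall>t\<in>{0..1}. cbic \<sigma> n \<sigma> x y t = \<sigma> x y t))"
  using conical_bicombing_cbic[OF assms] cbic_self_eq[OF _ assms(3)] by blast

end
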